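(* For every positive integer $m$, $$\frac13\cdot\frac{9^m}{m}\le F(m,3)\le\frac{\sqrt{27}}{4\pi}\cdot\frac{9^m}{m}.$$
   Context: For positive integers $m,i$, $F(m,i):=\sum_{v_1,\dots,v_i\in\mathbb Z_{\ge0},\ v_1+\cdots+v_i=m}\binom{m}{v_1,\dots,v_i}^2$, where $\binom{m}{v_1,\dots,v_i}=\frac{m!}{v_1!\cdots v_i!}$ is the multinomial coefficient. *)

theory Defs
  imports "HOL-Analysis.Analysis"
begin

definition multinom :: "nat \<Rightarrow> nat \<Rightarrow> (nat \<Rightarrow> nat) \<Rightarrow> nat" where
  "multinom m i v = fact m div (\<Prod>j<i. fact (v j))"

definition comps :: "nat \<Rightarrow> nat \<Rightarrow> (nat \<Rightarrow> nat) set" where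
  "comps m i = {v. (\<forall>j. j \<ge> i \<longrightarrow> v j = 0) \<and> (\<Sum>j<i. v j) = m}"

definition F :: "nat \<Rightarrow> nat \<Rightarrow> nat" where
  "F m i = (\<Sum>v\<in>comps m i. (multinom m i v)^2)"

end

theory Submission
  imports Defs "HOL-Probability.Distributions" "HOL-Real_Asymp.Real_Asymp"
begin

text \<open>
  Writing a composition of m into three parts as (m - k, a, k - a) gives
  F(m,3) = sum over k of C(m,k)^2 C(2k,k). Zeilberger's algorithm yields the recurrence
  n^2 a(n) = (10n^2 - 10n + 3) a(n-1) - 9(n-1)^2 a(n-2) for a(n) = F(n,3), from which induction
  shows that r(n) = n F(n,3) / 9^n increases, starting from r(1) = 1/3.
  On the other hand F(n,3) is the constant term of |1 + z + w|^(2n) on the torus, so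
  4 pi^2 F(n,3) / 9^n is the integral over [-pi,pi]^2 of the n-th power of a kernel bounded by
  exp (-(t^2 + y^2) / (9 pi^2)). After rescaling both variables by sqrt n, dominated convergence
  gives r(n) \<longrightarrow> sqrt 27 / (4 pi), a Gaussian integral, and monotonicity turns the limit into
  the upper bound.
\<close>

section \<open>Reduction to a single binomial sum\<close>

definition triple :: "nat \<Rightarrow> nat \<Rightarrow> nat \<Rightarrow> nat \<Rightarrow> nat" where
  "triple x y z = (\<lambda>j. if j = 0 then x else if j = 1 then y else if j = 2 then z else 0)"

lemma multinom_triple:
  assumes "a \<le> k" "k \<le> m"
  shows "multinom m 3 (triple (m - k) a (k - a)) = (m choose k) * (k choose a)"
proof -
  have "(\<Prod>j<3. fact (triple (m - k) a (k - a) j)) = (fact (m - k) * fact a * fact (k - a) :: nat)"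
    by (simp add: triple_def numeral_3_eq_3 numeral_2_eq_2 lessThan_Suc)
  moreover have "fact m = (m choose k) * (k choose a) * (fact (m - k) * fact a * fact (k - a) :: nat)"
    using binomial_fact_lemma[OF assms(1)] binomial_fact_lemma[OF assms(2)]
    by (metis mult.assoc mult.commute mult.left_commute)
  ultimately show ?thesis
    unfolding multinom_def by simp
qed

lemma bij_betw_triple_comps:
  "bij_betw (\<lambda>(k, a). triple (m - k) a (k - a)) (SIGMA k:{..m}. {..k}) (comps m 3)"
proof (rule bij_betwI[where g = "\<lambda>v. (v 1 + v 2, v 1)"])
  show "(\<lambda>(k, a). triple (m - k) a (k - a)) \<in> (SIGMA k:{..m}. {..k}) \<rightarrow> comps m 3"
    by (auto simp: triple_def comps_def numeral_3_eq_3 numeral_2_eq_2 lessThan_Suc)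
  show "(\<lambda>v. (v 1 + v 2, v 1)) \<in> comps m 3 \<rightarrow> (SIGMA k:{..m}. {..k})"
    by (auto simp: comps_def numeral_3_eq_3 numeral_2_eq_2 lessThan_Suc)
  show "(\<lambda>v. (v 1 + v 2, v 1)) ((\<lambda>(k, a). triple (m - k) a (k - a)) x) = x"
    if "x \<in> (SIGMA k:{..m}. {..k})" for x
    using that by (auto simp: triple_def)
  show "(\<lambda>(k, a). triple (m - k) a (k - a)) (v 1 + v 2, v 1) = v" if "v \<in> comps m 3" for v
    using that by (auto simp: fun_eq_iff triple_def comps_def numeral_3_eq_3 numeral_2_eq_2 lessThan_Suc)
qed

definition F3_summand :: "nat \<Rightarrow> nat \<Rightarrow> nat" where
  "F3_summand n k = (n choose k)^2 * ((2 * k) choose k)"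

lemma real_F3_summand: "real (F3_summand n k) = real (n choose k)^2 * real ((2 * k) choose k)"
  by (simp add: F3_summand_def)

lemma F3_summand_eq_0: "n < k \<Longrightarrow> F3_summand n k = 0"
  by (simp add: F3_summand_def)

lemma F_3_eq_sum: "F n 3 = (\<Sum>k\<le>n. F3_summand n k)"
proof -
  have "F n 3 = (\<Sum>(k, a)\<in>(SIGMA k:{..n}. {..k}). (multinom n 3 (triple (n - k) a (k - a)))^2)"
    unfolding F_def
    using sum.reindex_bij_betw[OF bij_betw_triple_comps, of "\<lambda>v. (multinom n 3 v)^2"]
    by (simp add: case_prod_unfold)
  also have "\<dots> = (\<Sum>(k, a)\<in>(SIGMA k:{..n}. {..k}). ((n choose k) * (k choose a))^2)"
    by (intro sum.cong) (auto simp: multinom_triple simp del: power_mult_distrib)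
  also have "\<dots> = (\<Sum>k\<le>n. (n choose k)^2 * (\<Sum>a\<le>k. (k choose a)^2))"
    by (simp add: sum.Sigma[symmetric] power_mult_distrib sum_distrib_left)
  also have "\<dots> = (\<Sum>k\<le>n. F3_summand n k)"
    by (simp add: F3_summand_def choose_square_sum)
  finally show ?thesis .
qed

section \<open>A three-term recurrence\<close>

lemma real_choose_Suc_Suc:
  "real (Suc n choose Suc k) = real (Suc n) * real (n choose k) / real (Suc k)"
proof -
  have "real (Suc k) * real (Suc n choose Suc k) = real (Suc n) * real (n choose k)"
    by (metis Suc_times_binomial of_nat_mult)
  then show ?thesis
    by (simp add: eq_divide_eq ac_simps del: binomial_Suc_Suc of_nat_Suc)
qed

lemma real_choose_Suc_left:
  assumes "k \<le> n"
  shows "real (Suc n choose k) = real (Suc n) * real (n choose k) / real (Suc n - k)"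
proof -
  have "real (Suc n - k) * real (Suc n choose k) = real (Suc n) * real (n choose k)"
    using binomial_absorb_comp[of "Suc n" k] by (metis diff_Suc_1 of_nat_mult)
  then show ?thesis
    using assms by (simp add: eq_divide_eq ac_simps del: binomial_Suc_Suc)
qed

lemma real_choose_Suc_right:
  "real (n choose Suc k) = (real n - real k) * real (n choose k) / real (Suc k)"
proof -
  have "real (Suc k) * real (Suc n choose Suc k) = real (Suc n) * real (n choose k)"
    by (metis Suc_times_binomial of_nat_mult)
  moreover have "real (Suc n choose Suc k) = real (n choose k) + real (n choose Suc k)"
    by simp
  ultimately show ?thesis
    by (simp add: eq_divide_eq algebra_simps)
qed

lemma Suc_times_central_binomial_Suc:
  "Suc k * ((2 * Suc k) choose Suc k) = 2 * Suc (2 * k) * ((2 * k) choose k)"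
proof -
  have "2 * Suc k = Suc (Suc (2 * k))"
    by simp
  then have "Suc k * ((2 * Suc k) choose Suc k) = Suc (Suc (2 * k)) * (Suc (2 * k) choose k)"
    using Suc_times_binomial[of k "Suc (2 * k)"] by simp_all
  also have "\<dots> = 2 * (Suc k * (Suc (2 * k) choose k))"
    by simp
  also have "Suc k * (Suc (2 * k) choose k) = Suc (2 * k) * ((2 * k) choose k)"
    using binomial_absorb_comp[of "Suc (2 * k)" k] by (simp add: Suc_diff_le)
  finally show ?thesis
    by simp
qed

lemma real_central_binomial_Suc:
  "real ((2 * Suc k) choose Suc k) = 2 * (2 * real k + 1) * real ((2 * k) choose k) / real (Suc k)"
proof -
  have "real (Suc k) * real ((2 * Suc k) choose Suc k) = 2 * real (Suc (2 * k)) * real ((2 * k) choose k)"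
    by (metis Suc_times_central_binomial_Suc of_nat_mult of_nat_numeral)
  then show ?thesis
    by (simp add: eq_divide_eq ac_simps del: binomial_Suc_Suc)
qed

text \<open>The certificate found by Zeilberger's algorithm for the summand C(n,k)^2 C(2k,k).\<close>

definition F3_cert :: "nat \<Rightarrow> nat \<Rightarrow> real" where
  "F3_cert n k = (if k = 0 then 0
     else (12 * real k ^ 2 - 6 * real k + 8 * real n - 16 * real n * real k) * real (F3_summand (n - 1) (k - 1)))"

lemma F3_summand_telescope_Suc:
  assumes "l \<le> m"
  shows "real (m + 2)^2 * F3_summand (m + 2) (Suc l)
         - (10 * real (m + 2)^2 - 10 * real (m + 2) + 3) * F3_summand (m + 1) (Suc l)
         + 9 * real (m + 1)^2 * F3_summand m (Suc l)
       = F3_cert (m + 2) (Suc (Suc l)) - F3_cert (m + 2) (Suc l)"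
proof -
  \<comment> \<open>All binomials involved are rational multiples of X or Y, leaving an identity of rational functions.\<close>
  define X where "X = real (m choose l)"
  define Y where "Y = real ((2 * l) choose l)"
  define D where "D = real m + 1 - real l"
  define E where "E = real l + 1"
  have hm: "real m = D + E - 2" and hl: "real l = E - 1"
    by (simp_all add: D_def E_def)
  have D0: "D \<noteq> 0" and E0: "E \<noteq> 0"
    using assms by (simp_all add: D_def E_def add_nonneg_eq_0_iff)
  have C1: "real (Suc m choose l) = real (Suc m) * X / D"
    using real_choose_Suc_left[OF assms] assms by (simp add: X_def D_def of_nat_diff)
  have C2: "real (Suc (Suc m) choose Suc l) = real (Suc (Suc m)) * (real (Suc m) * X / D) / E"
    using real_choose_Suc_Suc[of "Suc m" l] by (simp add: C1 E_def del: binomial_Suc_Suc)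
  have C3: "real (Suc m choose Suc l) = real (Suc m) * X / E"
    using real_choose_Suc_Suc[of m l] by (simp add: X_def E_def del: binomial_Suc_Suc)
  have C4: "real (m choose Suc l) = (real m - real l) * X / E"
    using real_choose_Suc_right[of m l] by (simp add: X_def E_def)
  have C5: "real ((2 * Suc l) choose Suc l) = 2 * (2 * real l + 1) * Y / E"
    using real_central_binomial_Suc[of l] by (simp add: Y_def E_def)
  have "m + 2 = Suc (Suc m)" "m + 1 = Suc m"
    by simp_all
  moreover have "real (F3_summand (Suc (Suc m)) (Suc l))
      = (real (Suc (Suc m)) * (real (Suc m) * X / D) / E)^2 * (2 * (2 * real l + 1) * Y / E)"
    unfolding real_F3_summand C2 C5 ..
  moreover have "real (F3_summand (Suc m) (Suc l)) = (real (Suc m) * X / E)^2 * (2 * (2 * real l + 1) * Y / E)"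
    unfolding real_F3_summand C3 C5 ..
  moreover have "real (F3_summand m (Suc l)) = ((real m - real l) * X / E)^2 * (2 * (2 * real l + 1) * Y / E)"
    unfolding real_F3_summand C4 C5 ..
  moreover have "real (F3_summand (Suc m) l) = (real (Suc m) * X / D)^2 * Y"
    unfolding real_F3_summand C1 Y_def ..
  ultimately show ?thesis
    unfolding F3_cert_def
    apply (simp only: diff_Suc_1 nat.distinct if_False)
    apply (simp only: of_nat_Suc hm hl)
    using D0 E0 by (simp add: field_simps power2_eq_square)
qed

lemma F3_summand_telescope:
  "real (m + 2)^2 * F3_summand (m + 2) k
     - (10 * real (m + 2)^2 - 10 * real (m + 2) + 3) * F3_summand (m + 1) k
     + 9 * real (m + 1)^2 * F3_summand m k
   = F3_cert (m + 2) (Suc k) - F3_cert (m + 2) k"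
proof (cases k)
  case 0
  then show ?thesis
    by (simp add: F3_summand_def F3_cert_def algebra_simps power2_eq_square)
next
  case (Suc l)
  consider "l \<le> m" | "l = Suc m" | "Suc m < l"
    by linarith
  then show ?thesis
  proof cases
    case 1
    then show ?thesis
      unfolding Suc by (rule F3_summand_telescope_Suc)
  next
    case 2
    define C where "C = real ((2 * Suc m) choose Suc m)"
    have "real (Suc (Suc m)) * real ((2 * Suc (Suc m)) choose Suc (Suc m)) = 2 * real (Suc (2 * Suc m)) * C"
      unfolding C_def by (metis Suc_times_central_binomial_Suc of_nat_mult of_nat_numeral)
    then have "real (Suc (Suc m))^2 * real (F3_summand (Suc (Suc m)) (Suc (Suc m)))
        = real (Suc (Suc m)) * (2 * real (Suc (2 * Suc m)) * C)"
      unfolding real_F3_summand binomial_n_n power2_eq_square mult.assoc by simp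
    then show ?thesis
      unfolding Suc 2 F3_cert_def
      by (simp add: real_F3_summand C_def F3_summand_eq_0 power2_eq_square algebra_simps del: binomial_Suc_Suc)
  next
    case 3
    then show ?thesis
      unfolding Suc by (simp add: F3_cert_def F3_summand_eq_0)
  qed
qed

lemma F_3_eq_sum_lessThan: "n \<le> N \<Longrightarrow> F n 3 = (\<Sum>k<Suc N. F3_summand n k)"
  unfolding F_3_eq_sum lessThan_Suc_atMost
  by (rule sum.mono_neutral_left) (auto simp: F3_summand_eq_0)

lemma F_3_recurrence:
  "real (m + 2)^2 * F (m + 2) 3 - (10 * real (m + 2)^2 - 10 * real (m + 2) + 3) * F (m + 1) 3
     + 9 * real (m + 1)^2 * F m 3 = 0"
proof -
  have "real (m + 2)^2 * F (m + 2) 3 - (10 * real (m + 2)^2 - 10 * real (m + 2) + 3) * F (m + 1) 3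
        + 9 * real (m + 1)^2 * F m 3
      = (\<Sum>k<Suc (m + 2). real (m + 2)^2 * F3_summand (m + 2) k
          - (10 * real (m + 2)^2 - 10 * real (m + 2) + 3) * F3_summand (m + 1) k
          + 9 * real (m + 1)^2 * F3_summand m k)"
    using F_3_eq_sum_lessThan[of m "m + 2"] F_3_eq_sum_lessThan[of "m + 1" "m + 2"]
      F_3_eq_sum_lessThan[of "m + 2" "m + 2"]
    by (simp only: of_nat_sum sum.distrib sum_subtractf sum_distrib_left order_refl le_add1 add_le_mono)
  also have "\<dots> = (\<Sum>k<Suc (m + 2). F3_cert (m + 2) (Suc k) - F3_cert (m + 2) k)"
    by (simp only: F3_summand_telescope)
  also have "\<dots> = F3_cert (m + 2) (Suc (m + 2)) - F3_cert (m + 2) 0"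
    by (rule sum_lessThan_telescope)
  also have "\<dots> = 0"
    by (simp add: F3_cert_def F3_summand_eq_0)
  finally show ?thesis .
qed

lemma recurrence_ratio_step:
  fixes x A B C :: real
  assumes "1 \<le> x" "0 \<le> B" "9 * x * A \<le> (x + 1) * B"
    and rec: "(x + 2)^2 * C - (10 * (x + 2)^2 - 10 * (x + 2) + 3) * B + 9 * (x + 1)^2 * A = 0"
  shows "9 * (x + 1) * B \<le> (x + 2) * C"
proof -
  have "(x + 2)^2 * C = (10 * (x + 2)^2 - 10 * (x + 2) + 3) * B - (x + 1)^2 * (9 * x * A) / x"
    using rec assms(1) by (simp add: field_simps)
  then have "x * (x + 2) * ((x + 2) * C - 9 * (x + 1) * B) = x * (x^2 + 3 * x + 5) * B - (x + 1)^2 * (9 * x * A)"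
    using assms(1) by (simp add: field_simps power2_eq_square)
  also have "\<dots> \<ge> x * (x^2 + 3 * x + 5) * B - (x + 1)^2 * ((x + 1) * B)"
    using assms(3) by (simp add: mult_left_mono)
  also have "x * (x^2 + 3 * x + 5) * B - (x + 1)^2 * ((x + 1) * B) = (2 * x - 1) * B"
    by (simp add: algebra_simps power2_eq_square)
  finally have "(2 * x - 1) * B \<le> x * (x + 2) * ((x + 2) * C - 9 * (x + 1) * B)" .
  moreover have "0 \<le> (2 * x - 1) * B"
    using assms(1,2) by simp
  ultimately have "0 \<le> x * (x + 2) * ((x + 2) * C - 9 * (x + 1) * B)"
    by linarith
  moreover have "0 < x * (x + 2)"
    using assms(1) by simp
  ultimately show ?thesis
    using mult_pos_neg[of "x * (x + 2)" "(x + 2) * C - 9 * (x + 1) * B"] by linarith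
qed

lemma F_3_ratio_mono: "1 \<le> n \<Longrightarrow> 9 * real n * F n 3 \<le> real (n + 1) * F (n + 1) 3"
proof (induction n rule: dec_induct)
  case base
  then show ?case
    by (simp add: F_3_eq_sum F3_summand_def numeral_2_eq_2)
next
  case (step n)
  then show ?case
    using recurrence_ratio_step[of "real n" "F (n + 1) 3" "F n 3" "F (n + 2) 3"] F_3_recurrence[of n]
    by (simp add: ac_simps)
qed

section \<open>Integral representation\<close>

text \<open>Both sides equal |1 + a e^(it)|^(2n) = (1 + a e^(it))^n (1 + a e^(-it))^n.\<close>

lemma cos_poly_power_expansion:
  fixes a t :: real
  shows "(1 + a^2 + 2 * a * cos t)^n =
    (\<Sum>j\<le>n. \<Sum>k\<le>n. real (n choose j) * real (n choose k) * a^(j + k) * cos (real_of_int (int j - int k) * t))"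
proof -
  have factor: "complex_of_real (1 + a^2 + 2 * a * cos t) = (1 + of_real a * cis t) * (1 + of_real a * cis (-t))"
  proof -
    have c1: "cis t * cis (-t) = 1" and c2: "cis t + cis (-t) = complex_of_real (2 * cos t)"
      by (simp_all add: cis_mult complex_eq_iff)
    have "(1 + of_real a * cis t) * (1 + of_real a * cis (-t))
        = 1 + of_real a * (cis t + cis (-t)) + (of_real a)^2 * (cis t * cis (-t))"
      by (simp add: algebra_simps power2_eq_square)
    also have "\<dots> = complex_of_real (1 + a^2 + 2 * a * cos t)"
      unfolding c1 c2 by simp
    finally show ?thesis
      by simp
  qed
  have "complex_of_real ((1 + a^2 + 2 * a * cos t)^n) = (of_real a * cis t + 1)^n * (of_real a * cis (-t) + 1)^n"
    unfolding of_real_power factor by (simp add: power_mult_distrib add.commute)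
  also have "\<dots> = (\<Sum>j\<le>n. \<Sum>k\<le>n. of_nat (n choose j) * (of_real a * cis t)^j * (of_nat (n choose k) * (of_real a * cis (-t))^k))"
    unfolding binomial_ring by (simp add: sum_product)
  also have "\<dots> = (\<Sum>j\<le>n. \<Sum>k\<le>n. complex_of_real (real (n choose j) * real (n choose k) * a^(j + k))
                                     * cis (real_of_int (int j - int k) * t))"
  proof (intro sum.cong refl)
    fix j k
    have "cis t ^ j * cis (-t) ^ k = cis (real j * t + real k * (-t))"
      by (simp only: Complex.DeMoivre cis_mult)
    also have "real j * t + real k * (-t) = real_of_int (int j - int k) * t"
      by (simp add: algebra_simps)
    finally have "cis t ^ j * cis (-t) ^ k = cis (real_of_int (int j - int k) * t)" .
    then show "of_nat (n choose j) * (of_real a * cis t)^j * (of_nat (n choose k) * (of_real a * cis (-t))^k) =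
      complex_of_real (real (n choose j) * real (n choose k) * a^(j + k)) * cis (real_of_int (int j - int k) * t)"
      by (simp add: power_mult_distrib power_add algebra_simps)
  qed
  finally have "Re (complex_of_real ((1 + a^2 + 2 * a * cos t)^n)) = Re (\<Sum>j\<le>n. \<Sum>k\<le>n.
      complex_of_real (real (n choose j) * real (n choose k) * a^(j + k)) * cis (real_of_int (int j - int k) * t))"
    by simp
  then show ?thesis
    by (simp add: Re_sum)
qed

lemma has_integral_cos_poly_power:
  fixes a :: real
  shows "((\<lambda>t. (1 + a^2 + 2 * a * cos t)^n) has_integral (2 * pi * (\<Sum>j\<le>n. real (n choose j)^2 * a^(2 * j)))) {-pi..pi}"
proof -
  have "((\<lambda>t. (1 + a^2 + 2 * a * cos t)^n) has_integral
      (\<Sum>j\<le>n. \<Sum>k\<le>n. real (n choose j) * real (n choose k) * a^(j + k) * (if int j - int k = 0 then 2 * pi else 0))) {-pi..pi}"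
    unfolding cos_poly_power_expansion
    by (intro has_integral_sum finite_atMost has_integral_mult_right) (rule has_integral_cos_nx)
  also have "(\<Sum>j\<le>n. \<Sum>k\<le>n. real (n choose j) * real (n choose k) * a^(j + k) * (if int j - int k = 0 then 2 * pi else 0))
      = (\<Sum>j\<le>n. \<Sum>k\<le>n. if k = j then real (n choose j) * real (n choose k) * a^(j + k) * (2 * pi) else 0)"
    by (intro sum.cong refl) auto
  also have "\<dots> = (\<Sum>j\<le>n. real (n choose j) * real (n choose j) * a^(j + j) * (2 * pi))"
    by (intro sum.cong refl) simp
  also have "\<dots> = (\<Sum>j\<le>n. 2 * pi * (real (n choose j)^2 * a^(2 * j)))"
    by (intro sum.cong refl) (simp add: power2_eq_square flip: mult_2)
  finally show ?thesis
    by (simp add: sum_distrib_left)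
qed

lemma sin_ge_mult_cos:
  fixes x :: real
  assumes "0 \<le> x" "x \<le> pi / 2"
  shows "x * cos x \<le> sin x"
proof (cases "x = 0")
  case False
  then have "0 < x"
    using assms by simp
  from MVT2[OF this, of sin cos] obtain z where z: "0 < z" "z < x" "sin x - sin 0 = (x - 0) * cos z"
    by (auto intro: DERIV_sin)
  have "cos x \<le> cos z"
    using z assms by (subst cos_mono_le_eq) auto
  then show ?thesis
    using z assms by (simp add: mult_left_mono)
qed simp

lemma one_minus_cos_ge_sq:
  fixes t :: real
  assumes "\<bar>t\<bar> \<le> pi"
  shows "t^2 / pi^2 \<le> 1 - cos t"
proof -
  define x where "x = \<bar>t\<bar>"
  have cx: "cos x = cos t" "x^2 = t^2" and x: "0 \<le> x" "x \<le> pi"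
    using assms by (auto simp: x_def abs_if)
  have "x^2 / pi^2 \<le> 1 - cos x"
  proof (cases "x \<le> pi / 2")
    case False
    then have "cos x \<le> 0"
      using x cos_mono_le_eq[of "pi / 2" x] by simp
    moreover have "x^2 / pi^2 \<le> 1"
      using x by (simp add: power_mono)
    ultimately show ?thesis
      by linarith
  next
    case True
    \<comment> \<open>On [0, pi/2], sin (x/2) \<ge> (x/2) cos (pi/4); and 1 - cos x = 2 sin (x/2)^2.\<close>
    have "cos (pi / 4) \<le> cos (x / 2)"
      using True x by (subst cos_mono_le_eq) auto
    then have "x / 2 * (sqrt 2 / 2) \<le> x / 2 * cos (x / 2)"
      using x by (intro mult_left_mono) (auto simp: cos_45)
    also have "\<dots> \<le> sin (x / 2)"
      using True x by (intro sin_ge_mult_cos) auto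
    finally have "(x / 2 * (sqrt 2 / 2))^2 \<le> sin (x / 2)^2"
      using x by (intro power_mono) auto
    then have "x^2 / 8 \<le> sin (x / 2)^2"
      by (simp add: power_mult_distrib power_divide)
    moreover have "cos x = 1 - 2 * sin (x / 2)^2"
      using cos_double_sin[of "x / 2"] by simp
    moreover have "x^2 / pi^2 \<le> x^2 / 4"
      using pi_gt3 mult_mono[of 2 pi 2 pi] by (intro divide_left_mono) (auto simp: power2_eq_square)
    ultimately show ?thesis
      by linarith
  qed
  then show ?thesis
    using cx by simp
qed

text \<open>torus_kernel t y = |1 + e^(iy) + e^(i(t + y/2))|^2 / 9.\<close>

definition torus_kernel :: "real \<Rightarrow> real \<Rightarrow> real" where
  "torus_kernel t y = (1 + 4 * cos (y / 2)^2 + 4 * cos (y / 2) * cos t) / 9"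

lemma torus_kernel_nonneg:
  assumes "\<bar>y\<bar> \<le> pi"
  shows "0 \<le> torus_kernel t y"
proof -
  have "0 \<le> cos (y / 2)"
    using assms by (intro cos_ge_zero) auto
  then have "0 \<le> 4 * cos (y / 2) * (1 + cos t)"
    using cos_ge_minus_one[of t] by (intro mult_nonneg_nonneg) linarith+
  then have "0 \<le> (1 - 2 * cos (y / 2))^2 + 4 * cos (y / 2) * (1 + cos t)"
    by simp
  also have "\<dots> = 1 + 4 * cos (y / 2)^2 + 4 * cos (y / 2) * cos t"
    by algebra
  finally show ?thesis
    unfolding torus_kernel_def by simp
qed

lemma torus_kernel_le_exp:
  assumes "\<bar>t\<bar> \<le> pi" "\<bar>y\<bar> \<le> pi"
  shows "torus_kernel t y \<le> exp (- (t^2 + y^2) / (9 * pi^2))"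
proof -
  define c where "c = cos (y / 2)"
  have c: "0 \<le> c" "c \<le> 1"
    using assms unfolding c_def by (auto intro: cos_ge_zero)
  have split: "9 * (1 - torus_kernel t y) = 4 * (1 - c) * (2 + c) + 4 * c * (1 - cos t)"
    unfolding torus_kernel_def c_def by (simp add: algebra_simps power2_eq_square)
  have ht: "t^2 / pi^2 \<le> 1 - cos t"
    using assms(1) by (rule one_minus_cos_ge_sq)
  have hy: "y^2 / (4 * pi^2) \<le> 1 - c"
    using one_minus_cos_ge_sq[of "y / 2"] assms(2) by (simp add: c_def power_divide)
  have "(t^2 + y^2) / pi^2 \<le> 9 * (1 - torus_kernel t y)"
  proof (cases "1 / 4 \<le> c")
    case True
    have "y^2 / (4 * pi^2) * 2 \<le> (1 - c) * (2 + c)"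
      using hy c by (intro mult_mono) auto
    moreover have "1 / 4 * (t^2 / pi^2) \<le> c * (1 - cos t)"
      using True ht by (intro mult_mono) auto
    moreover have "(t^2 + y^2) / pi^2 = 4 * (y^2 / (4 * pi^2) * 2) + 4 * (1 / 4 * (t^2 / pi^2)) - y^2 / pi^2"
      by (simp add: field_simps)
    moreover have "0 \<le> y^2 / pi^2"
      by simp
    ultimately show ?thesis
      unfolding split by linarith
  next
    case False
    have "3 / 4 * 2 \<le> (1 - c) * (2 + c)"
      using False c by (intro mult_mono) auto
    moreover have "0 \<le> c * (1 - cos t)"
      using c by simp
    moreover have "t^2 \<le> pi^2" "y^2 \<le> pi^2"
      using assms by (auto simp: abs_le_square_iff[symmetric])
    then have "(t^2 + y^2) / pi^2 \<le> 2"
      by (simp add: divide_le_eq)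
    ultimately show ?thesis
      unfolding split by linarith
  qed
  then have "torus_kernel t y \<le> 1 + (- (t^2 + y^2) / (9 * pi^2))"
    by (simp add: field_simps)
  also have "\<dots> \<le> exp (- (t^2 + y^2) / (9 * pi^2))"
    by (rule exp_ge_add_one_self)
  finally show ?thesis .
qed

definition torus_kernel_marginal :: "nat \<Rightarrow> real \<Rightarrow> real" where
  "torus_kernel_marginal n y = 2 * pi / 9^n * (\<Sum>k\<le>n. real (n choose k)^2 * (2 + 2 * cos y)^k)"

lemma has_integral_torus_kernel_power: "((\<lambda>t. torus_kernel t y ^ n) has_integral torus_kernel_marginal n y) {-pi..pi}"
proof -
  define a where "a = 2 * cos (y / 2)"
  have a2: "a^2 = 2 + 2 * cos y"
    using cos_double_cos[of "y / 2"] by (simp add: a_def power_mult_distrib)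
  have "((\<lambda>t. (1 + a^2 + 2 * a * cos t)^n / 9^n) has_integral
      (2 * pi * (\<Sum>j\<le>n. real (n choose j)^2 * a^(2 * j))) / 9^n) {-pi..pi}"
    by (intro has_integral_divide has_integral_cos_poly_power)
  moreover have "(\<lambda>t. (1 + a^2 + 2 * a * cos t)^n / 9^n) = (\<lambda>t. torus_kernel t y ^ n)"
    by (simp add: fun_eq_iff torus_kernel_def a_def power_divide power_mult_distrib algebra_simps)
  ultimately show ?thesis
    unfolding torus_kernel_marginal_def power_mult a2 by simp
qed

lemma has_integral_torus_kernel_marginal:
  "(torus_kernel_marginal n has_integral (4 * pi^2 * F n 3 / 9^n)) {-pi..pi}"
proof -
  have "((\<lambda>y. \<Sum>k\<le>n. 2 * pi / 9^n * real (n choose k)^2 * (1 + 1^2 + 2 * 1 * cos y)^k) has_integral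
      (\<Sum>k\<le>n. 2 * pi / 9^n * real (n choose k)^2 * (2 * pi * (\<Sum>j\<le>k. real (k choose j)^2 * 1^(2 * j))))) {-pi..pi}"
    by (intro has_integral_sum finite_atMost has_integral_mult_right has_integral_cos_poly_power)
  moreover have "(\<lambda>y. \<Sum>k\<le>n. 2 * pi / 9^n * real (n choose k)^2 * (1 + 1^2 + 2 * 1 * cos y)^k)
      = torus_kernel_marginal n"
    by (simp add: fun_eq_iff torus_kernel_marginal_def sum_distrib_left mult.assoc)
  moreover have "(\<Sum>j\<le>k. real (k choose j)^2 * 1^(2 * j)) = real ((2 * k) choose k)" for k
    using choose_square_sum[of k] by (simp flip: of_nat_power of_nat_sum)
  then have "(\<Sum>k\<le>n. 2 * pi / 9^n * real (n choose k)^2 * (2 * pi * (\<Sum>j\<le>k. real (k choose j)^2 * 1^(2 * j))))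
      = 4 * pi^2 * F n 3 / 9^n"
    by (simp add: F_3_eq_sum real_F3_summand sum_distrib_left sum_divide_distrib power2_eq_square ac_simps)
  ultimately show ?thesis
    by simp
qed

section \<open>Asymptotics\<close>

lemma has_integral_exp_neg_sq:
  fixes c :: real
  assumes "0 < c"
  shows "((\<lambda>x. exp (- c * x^2)) has_integral sqrt (pi / c)) UNIV"
proof -
  define \<sigma> where "\<sigma> = sqrt (1 / (2 * c))"
  have \<sigma>: "0 < \<sigma>" "\<sigma>^2 = 1 / (2 * c)"
    using assms by (auto simp: \<sigma>_def)
  have "(normal_density 0 \<sigma> has_integral 1) UNIV"
    using has_integral_integral_lborel[OF integrable_normal_density[of \<sigma> 0]] integral_normal_density[of \<sigma> 0] \<sigma>(1)
    by metis
  then have "((\<lambda>x. sqrt (2 * pi * \<sigma>^2) * normal_density 0 \<sigma> x) has_integral sqrt (2 * pi * \<sigma>^2) * 1) UNIV"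
    by (rule has_integral_mult_right)
  moreover have "sqrt (2 * pi * \<sigma>^2) * normal_density 0 \<sigma> x = exp (- c * x^2)" for x
    unfolding normal_density_def using \<sigma> assms by (simp add: field_simps)
  moreover have "sqrt (2 * pi * \<sigma>^2) * 1 = sqrt (pi / c)"
    using \<sigma> assms by (simp add: field_simps)
  ultimately show ?thesis
    by simp
qed

lemma integrable_exp_neg_sq: "0 < (c::real) \<Longrightarrow> (\<lambda>x. exp (- c * x^2)) integrable_on UNIV"
  using has_integral_exp_neg_sq by (rule has_integral_integrable)

lemma integral_exp_neg_sq: "0 < (c::real) \<Longrightarrow> integral UNIV (\<lambda>x. exp (- c * x^2)) = sqrt (pi / c)"
  using has_integral_exp_neg_sq by (rule integral_unique)

lemma has_integral_rescale_interval:
  fixes f :: "real \<Rightarrow> real"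
  assumes "(f has_integral I) {a..b}" "0 < s"
  shows "((\<lambda>x. f (x / s)) has_integral (s * I)) {a * s..b * s}"
proof -
  have "1 / s \<noteq> 0"
    using assms(2) by simp
  from has_integral_stretch_real[OF assms(1) this]
  have "((\<lambda>x. f (1 / s * x)) has_integral (1 / \<bar>1 / s\<bar>) *\<^sub>R I) ((\<lambda>x. x / (1 / s)) ` {a..b})" .
  moreover have "(\<lambda>x. x / (1 / s)) ` {a..b} = {a * s..b * s}"
    using image_divide_atLeastAtMost[of "1 / s" a b] assms by simp
  ultimately show ?thesis
    using assms(2) by simp
qed

text \<open>The integrand after the substitution (t, y) = (u, v) / sqrt n, extended by zero outside the
  rescaled square.\<close>

definition torus_kernel_rescaled :: "nat \<Rightarrow> real \<Rightarrow> real \<Rightarrow> real" where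
  "torus_kernel_rescaled n v u =
     (if \<bar>u\<bar> \<le> pi * sqrt n \<and> \<bar>v\<bar> \<le> pi * sqrt n then torus_kernel (u / sqrt n) (v / sqrt n) ^ n else 0)"

lemma has_integral_torus_kernel_rescaled:
  assumes "1 \<le> n" "\<bar>v\<bar> \<le> pi * sqrt n"
  shows "(torus_kernel_rescaled n v has_integral sqrt n * torus_kernel_marginal n (v / sqrt n)) UNIV"
proof -
  define s where "s = sqrt n"
  have s: "0 < s"
    using assms by (simp add: s_def)
  have "((\<lambda>x. torus_kernel (x / s) (v / s) ^ n) has_integral (s * torus_kernel_marginal n (v / s))) {-pi * s..pi * s}"
    using has_integral_rescale_interval[OF has_integral_torus_kernel_power s] by simp
  then have "((\<lambda>x. if x \<in> {-pi * s..pi * s} then torus_kernel (x / s) (v / s) ^ n else 0)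
      has_integral (s * torus_kernel_marginal n (v / s))) UNIV"
    by (simp only: has_integral_restrict_UNIV)
  moreover have "(\<lambda>x. if x \<in> {-pi * s..pi * s} then torus_kernel (x / s) (v / s) ^ n else 0) = torus_kernel_rescaled n v"
    using assms(2) by (auto simp: torus_kernel_rescaled_def s_def fun_eq_iff abs_le_iff)
  ultimately show ?thesis
    by (simp add: s_def)
qed

lemma torus_kernel_rescaled_eq_0: "\<not> \<bar>v\<bar> \<le> pi * sqrt n \<Longrightarrow> torus_kernel_rescaled n v = (\<lambda>u. 0)"
  by (simp add: fun_eq_iff torus_kernel_rescaled_def)

lemma torus_kernel_rescaled_integrable:
  assumes "1 \<le> n"
  shows "torus_kernel_rescaled n v integrable_on UNIV"
proof (cases "\<bar>v\<bar> \<le> pi * sqrt n")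
  case True
  then show ?thesis
    using has_integral_torus_kernel_rescaled[OF assms] has_integral_integrable by blast
qed (simp add: torus_kernel_rescaled_eq_0 integrable_0)

lemma torus_kernel_rescaled_bound:
  assumes "1 \<le> n"
  shows "\<bar>torus_kernel_rescaled n v u\<bar> \<le> exp (- (1 / (9 * pi^2)) * u^2) * exp (- (1 / (9 * pi^2)) * v^2)"
proof (cases "\<bar>u\<bar> \<le> pi * sqrt n \<and> \<bar>v\<bar> \<le> pi * sqrt n")
  case True
  define s where "s = sqrt n"
  have s: "0 < s" "s^2 = n"
    using assms by (auto simp: s_def)
  have t: "\<bar>u / s\<bar> \<le> pi" "\<bar>v / s\<bar> \<le> pi"
    using True s by (auto simp: s_def divide_le_eq abs_divide)
  have q0: "0 \<le> torus_kernel (u / s) (v / s)"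
    using torus_kernel_nonneg t(2) .
  have "torus_kernel (u / s) (v / s) ^ n \<le> exp (- ((u / s)^2 + (v / s)^2) / (9 * pi^2)) ^ n"
    using torus_kernel_le_exp[OF t] q0 by (rule power_mono)
  also have "\<dots> = exp (real n * (- ((u / s)^2 + (v / s)^2) / (9 * pi^2)))"
    by (simp only: exp_of_nat_mult)
  also have "real n * (- ((u / s)^2 + (v / s)^2) / (9 * pi^2)) = - (1 / (9 * pi^2)) * u^2 + - (1 / (9 * pi^2)) * v^2"
    using s assms by (simp add: power_divide field_simps)
  also have "exp (- (1 / (9 * pi^2)) * u^2 + - (1 / (9 * pi^2)) * v^2)
      = exp (- (1 / (9 * pi^2)) * u^2) * exp (- (1 / (9 * pi^2)) * v^2)"
    by (rule exp_add)
  finally show ?thesis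
    using True q0 by (simp add: torus_kernel_rescaled_def s_def)
qed (auto simp: torus_kernel_rescaled_def)

lemma torus_kernel_rescaled_power_tendsto:
  "(\<lambda>n. torus_kernel (u / sqrt n) (v / sqrt n) ^ n) \<longlonglongrightarrow> exp (- (2 * u^2 / 9 + v^2 / 6))"
proof -
  have "((\<lambda>x::real. ((1 + 4 * cos ((v / sqrt x) / 2)^2 + 4 * cos ((v / sqrt x) / 2) * cos (u / sqrt x)) / 9) powr x)
      \<longlongrightarrow> exp ((- (3 * (v * v) / 2) - 2 * (u * u)) / 9)) at_top"
    by real_asymp
  moreover have "exp ((- (3 * (v * v) / 2) - 2 * (u * u)) / 9) = exp (- (2 * u^2 / 9 + v^2 / 6))"
    by (simp add: power2_eq_square field_simps)
  ultimately have "((\<lambda>x. torus_kernel (u / sqrt x) (v / sqrt x) powr x) \<longlongrightarrow> exp (- (2 * u^2 / 9 + v^2 / 6))) at_top"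
    unfolding torus_kernel_def by simp
  from filterlim_compose[OF this filterlim_real_sequentially]
  have lim: "(\<lambda>n. torus_kernel (u / sqrt n) (v / sqrt n) powr real n) \<longlonglongrightarrow> exp (- (2 * u^2 / 9 + v^2 / 6))"
    by (simp add: o_def)
  have "eventually (\<lambda>x. 0 < torus_kernel (u / sqrt x) (v / sqrt x)) at_top"
    unfolding torus_kernel_def by real_asymp
  then have "eventually (\<lambda>n. 0 < torus_kernel (u / sqrt n) (v / sqrt n)) sequentially"
    using filterlim_real_sequentially unfolding filterlim_iff by auto
  then have "eventually (\<lambda>n. torus_kernel (u / sqrt n) (v / sqrt n) powr real n = torus_kernel (u / sqrt n) (v / sqrt n) ^ n) sequentially"
    by eventually_elim (simp add: powr_realpow)
  from tendsto_cong[OF this] lim show ?thesis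
    by simp
qed

definition torus_kernel_rescaled_marginal :: "nat \<Rightarrow> real \<Rightarrow> real" where
  "torus_kernel_rescaled_marginal n v = integral UNIV (torus_kernel_rescaled n v)"

lemma has_integral_torus_kernel_rescaled_marginal:
  assumes "1 \<le> n"
  shows "(torus_kernel_rescaled_marginal n has_integral real n * (4 * pi^2 * F n 3 / 9^n)) UNIV"
proof -
  define s where "s = sqrt n"
  have s: "0 < s" "s * s = n"
    using assms by (auto simp: s_def)
  have "torus_kernel_rescaled_marginal n = (\<lambda>v. if v \<in> {-pi * s..pi * s} then s * torus_kernel_marginal n (v / s) else 0)"
  proof
    fix v
    show "torus_kernel_rescaled_marginal n v = (if v \<in> {-pi * s..pi * s} then s * torus_kernel_marginal n (v / s) else 0)"
      using has_integral_torus_kernel_rescaled[OF assms, of v] torus_kernel_rescaled_eq_0[of v n]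
      by (auto simp: torus_kernel_rescaled_marginal_def s_def abs_le_iff intro: integral_unique)
  qed
  moreover have "((\<lambda>v. s * torus_kernel_marginal n (v / s)) has_integral (s * (s * (4 * pi^2 * F n 3 / 9^n)))) {-pi * s..pi * s}"
    using has_integral_rescale_interval[OF has_integral_torus_kernel_marginal s(1)] by (intro has_integral_mult_right) simp
  ultimately have "(torus_kernel_rescaled_marginal n has_integral (s * (s * (4 * pi^2 * F n 3 / 9^n)))) UNIV"
    by (simp only: has_integral_restrict_UNIV)
  then show ?thesis
    using s by (simp add: mult.assoc[symmetric])
qed

lemma torus_kernel_rescaled_marginal_tendsto:
  "(\<lambda>k. torus_kernel_rescaled_marginal (Suc k) v) \<longlonglongrightarrow> sqrt (9 * pi / 2) * exp (- (1 / 6) * v^2)"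
proof -
  define g where "g = (\<lambda>u. exp (- (1 / 6) * v^2) * exp (- (2 / 9) * u^2))"
  have "(\<lambda>k. integral UNIV (torus_kernel_rescaled (Suc k) v)) \<longlonglongrightarrow> integral UNIV g"
  proof (rule dominated_convergence(2)[where h = "\<lambda>u. exp (- (1 / (9 * pi^2)) * v^2) * exp (- (1 / (9 * pi^2)) * u^2)"])
    show "torus_kernel_rescaled (Suc k) v integrable_on UNIV" for k
      by (rule torus_kernel_rescaled_integrable) simp
    show "(\<lambda>u. exp (- (1 / (9 * pi^2)) * v^2) * exp (- (1 / (9 * pi^2)) * u^2)) integrable_on UNIV"
      by (intro integrable_on_mult_right integrable_exp_neg_sq) simp
    show "norm (torus_kernel_rescaled (Suc k) v u) \<le> exp (- (1 / (9 * pi^2)) * v^2) * exp (- (1 / (9 * pi^2)) * u^2)" for k u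
      using torus_kernel_rescaled_bound[of "Suc k" v u] by (simp add: mult.commute)
    show "(\<lambda>k. torus_kernel_rescaled (Suc k) v u) \<longlonglongrightarrow> g u" for u
    proof -
      have "eventually (\<lambda>x::real. max \<bar>u\<bar> \<bar>v\<bar> \<le> pi * sqrt x) at_top"
        by real_asymp
      then have "eventually (\<lambda>n. max \<bar>u\<bar> \<bar>v\<bar> \<le> pi * sqrt (real n)) sequentially"
        using filterlim_real_sequentially unfolding filterlim_iff by auto
      then have "eventually (\<lambda>n. torus_kernel_rescaled n v u = torus_kernel (u / sqrt n) (v / sqrt n) ^ n) sequentially"
        by eventually_elim (auto simp: torus_kernel_rescaled_def)
      from tendsto_cong[OF this] torus_kernel_rescaled_power_tendsto[of u v]
      have "(\<lambda>n. torus_kernel_rescaled n v u) \<longlonglongrightarrow> exp (- (2 * u^2 / 9 + v^2 / 6))"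
        by simp
      moreover have "exp (- (2 * u^2 / 9 + v^2 / 6)) = g u"
        by (simp add: g_def exp_add[symmetric] algebra_simps)
      ultimately have "(\<lambda>n. torus_kernel_rescaled n v u) \<longlonglongrightarrow> g u"
        by simp
      then show ?thesis
        by (rule LIMSEQ_Suc)
    qed
  qed
  moreover have "integral UNIV (\<lambda>u. exp (- (2 / 9) * u^2)) = sqrt (pi / (2 / 9))"
    by (rule integral_exp_neg_sq) simp
  then have "integral UNIV g = sqrt (9 * pi / 2) * exp (- (1 / 6) * v^2)"
    unfolding g_def integral_mult_right by (simp add: field_simps)
  ultimately show ?thesis
    by (simp add: torus_kernel_rescaled_marginal_def)
qed

lemma torus_kernel_rescaled_marginal_bound:
  assumes "1 \<le> n"
  shows "\<bar>torus_kernel_rescaled_marginal n v\<bar> \<le> sqrt (9 * pi^3) * exp (- (1 / (9 * pi^2)) * v^2)"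
proof -
  have "norm (integral UNIV (torus_kernel_rescaled n v))
      \<le> integral UNIV (\<lambda>u. exp (- (1 / (9 * pi^2)) * v^2) * exp (- (1 / (9 * pi^2)) * u^2))"
  proof (rule integral_norm_bound_integral)
    show "torus_kernel_rescaled n v integrable_on UNIV"
      using assms by (rule torus_kernel_rescaled_integrable)
    show "(\<lambda>u. exp (- (1 / (9 * pi^2)) * v^2) * exp (- (1 / (9 * pi^2)) * u^2)) integrable_on UNIV"
      by (intro integrable_on_mult_right integrable_exp_neg_sq) simp
    show "norm (torus_kernel_rescaled n v u) \<le> exp (- (1 / (9 * pi^2)) * v^2) * exp (- (1 / (9 * pi^2)) * u^2)" for u
      using torus_kernel_rescaled_bound[OF assms, of v u] by (simp add: mult.commute)
  qed
  also have "\<dots> = exp (- (1 / (9 * pi^2)) * v^2) * sqrt (pi / (1 / (9 * pi^2)))"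
    unfolding integral_mult_right by (subst integral_exp_neg_sq) simp_all
  also have "pi / (1 / (9 * pi^2)) = 9 * pi^3"
    by (simp add: power2_eq_square power3_eq_cube)
  finally show ?thesis
    by (simp add: torus_kernel_rescaled_marginal_def mult.commute)
qed

lemma F_3_scaled_tendsto: "(\<lambda>n. real n * F n 3 / 9^n) \<longlonglongrightarrow> sqrt 27 / (4 * pi)"
proof -
  define g where "g = (\<lambda>v. sqrt (9 * pi / 2) * exp (- (1 / 6) * v^2))"
  have "(\<lambda>k. integral UNIV (torus_kernel_rescaled_marginal (Suc k))) \<longlonglongrightarrow> integral UNIV g"
  proof (rule dominated_convergence(2)[where h = "\<lambda>v. sqrt (9 * pi^3) * exp (- (1 / (9 * pi^2)) * v^2)"])
    show "torus_kernel_rescaled_marginal (Suc k) integrable_on UNIV" for k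
      using has_integral_torus_kernel_rescaled_marginal[of "Suc k"] has_integral_integrable by simp
    show "(\<lambda>v. sqrt (9 * pi^3) * exp (- (1 / (9 * pi^2)) * v^2)) integrable_on UNIV"
      by (intro integrable_on_mult_right integrable_exp_neg_sq) simp
    show "norm (torus_kernel_rescaled_marginal (Suc k) v) \<le> sqrt (9 * pi^3) * exp (- (1 / (9 * pi^2)) * v^2)" for k v
      using torus_kernel_rescaled_marginal_bound[of "Suc k" v] by simp
    show "(\<lambda>k. torus_kernel_rescaled_marginal (Suc k) v) \<longlonglongrightarrow> g v" for v
      unfolding g_def by (rule torus_kernel_rescaled_marginal_tendsto)
  qed
  moreover have "integral UNIV g = sqrt 27 * pi"
  proof -
    have "integral UNIV g = sqrt (9 * pi / 2) * sqrt (pi / (1 / 6))"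
      unfolding g_def integral_mult_right by (subst integral_exp_neg_sq) simp_all
    also have "\<dots> = sqrt (27 * pi^2)"
      by (simp add: real_sqrt_mult[symmetric] power2_eq_square)
    finally show ?thesis
      by (simp add: real_sqrt_mult)
  qed
  moreover have "integral UNIV (torus_kernel_rescaled_marginal (Suc k)) = 4 * pi^2 * (real (Suc k) * F (Suc k) 3 / 9 ^ Suc k)" for k
    using has_integral_torus_kernel_rescaled_marginal[of "Suc k"] by (simp add: integral_unique)
  ultimately have "(\<lambda>k. 4 * pi^2 * (real (Suc k) * F (Suc k) 3 / 9 ^ Suc k)) \<longlonglongrightarrow> sqrt 27 * pi"
    by simp
  then have "(\<lambda>k. 4 * pi^2 * (real (Suc k) * F (Suc k) 3 / 9 ^ Suc k) / (4 * pi^2)) \<longlonglongrightarrow> sqrt 27 * pi / (4 * pi^2)"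
    by (intro tendsto_divide tendsto_const) simp_all
  then have "(\<lambda>k. real (Suc k) * F (Suc k) 3 / 9 ^ Suc k) \<longlonglongrightarrow> sqrt 27 / (4 * pi)"
    by (simp add: power2_eq_square)
  then show ?thesis
    by (rule LIMSEQ_imp_Suc)
qed

lemma F_3_scaled_incseq: "incseq (\<lambda>n. real (Suc n) * F (Suc n) 3 / 9 ^ Suc n)"
proof (rule incseq_SucI)
  fix n
  have "9 * real (Suc n) * F (Suc n) 3 / 9 ^ Suc (Suc n) \<le> real (Suc (Suc n)) * F (Suc (Suc n)) 3 / 9 ^ Suc (Suc n)"
    using F_3_ratio_mono[of "Suc n"] by (intro divide_right_mono) simp_all
  moreover have "9 * x / 9 ^ Suc (Suc n) = x / 9 ^ Suc n" for x :: real
    by simp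
  ultimately show "real (Suc n) * F (Suc n) 3 / 9 ^ Suc n \<le> real (Suc (Suc n)) * F (Suc (Suc n)) 3 / 9 ^ Suc (Suc n)"
    by (simp only: mult.assoc)
qed

theorem mainTheorem19:
  fixes m :: nat
  assumes "m \<ge> 1"
  shows "(1/3) * (9 ^ m / real m) \<le> real (F m 3)
       \<and> real (F m 3) \<le> sqrt 27 / (4 * pi) * (9 ^ m / real m)"
proof -
  obtain k where k: "m = Suc k"
    using assms by (cases m) auto
  let ?r = "\<lambda>n. real (Suc n) * F (Suc n) 3 / 9 ^ Suc n"
  have "?r 0 \<le> ?r k"
    using monoD[OF F_3_scaled_incseq, of 0 k] by simp
  moreover have "?r 0 = 1 / 3"
    by (simp add: F_3_eq_sum F3_summand_def)
  ultimately have lower: "1 / 3 \<le> ?r k"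
    by linarith
  have upper: "?r k \<le> sqrt 27 / (4 * pi)"
    using incseq_le[OF F_3_scaled_incseq LIMSEQ_Suc[OF F_3_scaled_tendsto]] .
  have eq: "real (F m 3) = ?r k * (9 ^ m / real m)"
    using k by simp
  have "0 \<le> 9 ^ m / real m"
    by simp
  then show ?thesis
    unfolding eq using mult_right_mono[OF lower] mult_right_mono[OF upper] by blast
qed

end
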